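(* Let $\mathcal{G}$ be a network with non-monitor set $N$ and set of measurement paths $P$, let $S\subseteq N$ and $k\ge1$. (a) If for every failure set $F\subseteq N$ with $|F|\le k$ and every node $v\in S\setminus F$ there exists $p\in P$ traversing $v$ but none of the nodes of $F$, then $S$ is $k$-identifiable. (b) If $S$ is $k$-identifiable, then for every failure set $F\subseteq N$ with $|F|\le k-1$ and every node $v\in S\setminus F$ there exists $p\in P$ traversing $v$ but none of the nodes of $F$.
   Context: $\mathcal{G}$ is a finite connected undirected graph whose node set is partitioned into monitors $M$ and non-monitors $N$; $P$ is an arbitrary set of measurement paths. A failure set is any $F\subseteq N$; a path fails iff it traverses a node of $F$. $P_F$ is the set of paths in $P$ traversing at least one node of $F$; $F_1,F_2$ are distinguishable iff $P_{F_1}\ne P_{F_2}$. $S\subseteq N$ is $k$-identifiable if any two failure sets $F_1,F_2$ with $|F_1|,|F_2|\le k$ and $F_1\cap S\ne F_2\cap S$ are distinguishable. *)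

theory Defs
  imports Main
begin

definition network :: "'v set \<Rightarrow> ('v \<Rightarrow> 'v \<Rightarrow> bool) \<Rightarrow> 'v set \<Rightarrow> 'v set \<Rightarrow> bool" where
  "network V E M N \<longleftrightarrow> finite V \<and> V \<noteq> {} \<and>
     (\<forall>u v. E u v \<longrightarrow> u \<in> V \<and> v \<in> V) \<and> (\<forall>u v. E u v \<longrightarrow> E v u) \<and> (\<forall>v. \<not> E v v) \<and>
     (\<forall>u\<in>V. \<forall>v\<in>V. (u, v) \<in> {(x, y). E x y}\<^sup>*) \<and>
     M \<union> N = V \<and> M \<inter> N = {}"

definition is_path :: "('v \<Rightarrow> 'v \<Rightarrow> bool) \<Rightarrow> 'v list \<Rightarrow> bool" where
  "is_path E p \<longleftrightarrow> p \<noteq> [] \<and> (\<forall>i. Suc i < length p \<longrightarrow> E (p ! i) (p ! Suc i))"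

definition traverses :: "'v list \<Rightarrow> 'v \<Rightarrow> bool" where
  "traverses p v \<longleftrightarrow> v \<in> set p"

definition failed_paths :: "'v list set \<Rightarrow> 'v set \<Rightarrow> 'v list set" where
  "failed_paths P F = {p \<in> P. \<exists>v\<in>F. traverses p v}"

definition distinguishable :: "'v list set \<Rightarrow> 'v set \<Rightarrow> 'v set \<Rightarrow> bool" where
  "distinguishable P F1 F2 \<longleftrightarrow> failed_paths P F1 \<noteq> failed_paths P F2"

definition k_identifiable :: "'v set \<Rightarrow> 'v list set \<Rightarrow> nat \<Rightarrow> 'v set \<Rightarrow> bool" where
  "k_identifiable N P k S \<longleftrightarrow>
     (\<forall>F1 F2. F1 \<subseteq> N \<longrightarrow> F2 \<subseteq> N \<longrightarrow> card F1 \<le> k \<longrightarrow> card F2 \<le> k \<longrightarrow>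
        F1 \<inter> S \<noteq> F2 \<inter> S \<longrightarrow> distinguishable P F1 F2)"

end

theory Submission
  imports Defs
begin

text \<open>A path through \<open>v\<close> that avoids every node of \<open>F\<close> fails under \<open>F \<union> {v}\<close> but not under \<open>F\<close>,
  so it separates any two failure sets that differ at \<open>v\<close>; conversely, if \<open>F\<close> and \<open>F \<union> {v}\<close>
  are distinguishable, some path must fail only because of \<open>v\<close>.\<close>

lemma failed_paths_mono: "F \<subseteq> G \<Longrightarrow> failed_paths P F \<subseteq> failed_paths P G"
  unfolding failed_paths_def by blast

lemma distinguishable_sym: "distinguishable P F1 F2 \<longleftrightarrow> distinguishable P F2 F1"
  unfolding distinguishable_def by auto

lemma distinguishable_if_separating_path:
  assumes "p \<in> P" "traverses p v" "v \<in> A" "\<forall>u\<in>B. \<not> traverses p u"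
  shows "distinguishable P A B"
proof -
  have "p \<in> failed_paths P A" using assms unfolding failed_paths_def by blast
  moreover have "p \<notin> failed_paths P B" using assms(4) unfolding failed_paths_def by blast
  ultimately show ?thesis unfolding distinguishable_def by blast
qed

lemma separating_path_if_distinguishable_insert:
  assumes "distinguishable P (insert v F) F"
  shows "\<exists>p\<in>P. traverses p v \<and> (\<forall>u\<in>F. \<not> traverses p u)"
proof -
  have "failed_paths P F \<subset> failed_paths P (insert v F)"
    using assms failed_paths_mono[of F "insert v F" P] unfolding distinguishable_def by blast
  then obtain p where "p \<in> failed_paths P (insert v F)" "p \<notin> failed_paths P F" by blast
  then show ?thesis unfolding failed_paths_def by auto
qed

lemma k_identifiable_if_separating_paths:
  assumes separating: "\<forall>F. F \<subseteq> N \<longrightarrow> card F \<le> k \<longrightarrow>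
             (\<forall>v\<in>S - F. \<exists>p\<in>P. traverses p v \<and> (\<forall>u\<in>F. \<not> traverses p u))"
  shows "k_identifiable N P k S"
  unfolding k_identifiable_def
proof (intro allI impI)
  have one_sided: "distinguishable P A B"
    if B: "B \<subseteq> N" "card B \<le> k" and v: "v \<in> A \<inter> S" "v \<notin> B" for A B v
  proof -
    have "v \<in> S - B" using v by blast
    then obtain p where "p \<in> P" "traverses p v" "\<forall>u\<in>B. \<not> traverses p u"
      using separating B by blast
    with v(1) show ?thesis by (intro distinguishable_if_separating_path) auto
  qed
  fix F1 F2
  assume F1: "F1 \<subseteq> N" "card F1 \<le> k" and F2: "F2 \<subseteq> N" "card F2 \<le> k"
    and differ: "F1 \<inter> S \<noteq> F2 \<inter> S"
  from differ obtain v where "v \<in> F1 \<inter> S \<and> v \<notin> F2 \<or> v \<in> F2 \<inter> S \<and> v \<notin> F1"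
    by blast
  then show "distinguishable P F1 F2"
  proof
    assume "v \<in> F1 \<inter> S \<and> v \<notin> F2"
    then show ?thesis using one_sided[OF F2] by blast
  next
    assume "v \<in> F2 \<inter> S \<and> v \<notin> F1"
    then have "distinguishable P F2 F1" using one_sided[OF F1] by blast
    then show ?thesis by (simp add: distinguishable_sym)
  qed
qed

lemma separating_paths_if_k_identifiable:
  assumes ident: "k_identifiable N P k S" and "S \<subseteq> N" "k \<ge> 1"
    and F: "F \<subseteq> N" "card F \<le> k - 1" and v: "v \<in> S - F"
  shows "\<exists>p\<in>P. traverses p v \<and> (\<forall>u\<in>F. \<not> traverses p u)"
proof -
  have "card (insert v F) \<le> k"
    using \<open>k \<ge> 1\<close> F(2) by (intro card_insert_le_m1) auto
  moreover have "insert v F \<subseteq> N" using F(1) v \<open>S \<subseteq> N\<close> by blast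
  moreover have "card F \<le> k" using F(2) by simp
  moreover have "insert v F \<inter> S \<noteq> F \<inter> S" using v by blast
  ultimately have "distinguishable P (insert v F) F"
    using ident F(1) unfolding k_identifiable_def by blast
  then show ?thesis by (rule separating_path_if_distinguishable_insert)
qed

theorem lemma1:
  fixes V M N :: "'v set" and E :: "'v \<Rightarrow> 'v \<Rightarrow> bool" and P :: "'v list set"
    and S :: "'v set" and k :: nat
  assumes "network V E M N"
    and "\<forall>p\<in>P. is_path E p"
    and "S \<subseteq> N"
    and "k \<ge> 1"
  shows "((\<forall>F. F \<subseteq> N \<longrightarrow> card F \<le> k \<longrightarrow>
             (\<forall>v\<in>S - F. \<exists>p\<in>P. traverses p v \<and> (\<forall>u\<in>F. \<not> traverses p u)))
          \<longrightarrow> k_identifiable N P k S)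
       \<and> (k_identifiable N P k S \<longrightarrow>
          (\<forall>F. F \<subseteq> N \<longrightarrow> card F \<le> k - 1 \<longrightarrow>
             (\<forall>v\<in>S - F. \<exists>p\<in>P. traverses p v \<and> (\<forall>u\<in>F. \<not> traverses p u))))"
proof (intro conjI impI allI ballI)
  show "k_identifiable N P k S"
    if "\<forall>F. F \<subseteq> N \<longrightarrow> card F \<le> k \<longrightarrow>
          (\<forall>v\<in>S - F. \<exists>p\<in>P. traverses p v \<and> (\<forall>u\<in>F. \<not> traverses p u))"
    using that by (rule k_identifiable_if_separating_paths)
next
  fix F v
  assume "k_identifiable N P k S" "F \<subseteq> N" "card F \<le> k - 1" "v \<in> S - F"
  with assms(3,4) show "\<exists>p\<in>P. traverses p v \<and> (\<forall>u\<in>F. \<not> traverses p u)"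
    by (intro separating_paths_if_k_identifiable)
qed

end
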